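(* Let $n\ge 1$, $0<\alpha\le 1$, let $\Omega\subset\mathbb{R}^n$ be a bounded domain, and let $f\in C(\Omega)$ be bounded with $f\le 0$. Let $u:\mathbb{R}^n\to\mathbb{R}$ be a viscosity supersolution to $\mathcal{L}_\infty u=f$ in $\Omega$. Assume there exists $x_0\in\Omega$ such that $u(y)\ge u(x_0)$ for all $y\in\mathbb{R}^n\setminus\Omega$. Then $u$ is constant on $\mathbb{R}^n$.
   Context: For $0<\alpha\le1$ and a function $\varphi:\mathbb{R}^n\to\mathbb{R}$, the nonlocal infinity Laplacian is $\mathcal{L}_\infty\varphi(x)=\mathcal{L}^+_\infty\varphi(x)+\mathcal{L}^-_\infty\varphi(x)$, where $\mathcal{L}^+_\infty\varphi(x)=\sup_{y\in\mathbb{R}^n}\frac{\varphi(y)-\varphi(x)}{|x-y|^\alpha}$ and $\mathcal{L}^-_\infty\varphi(x)=\inf_{y\in\mathbb{R}^n}\frac{\varphi(y)-\varphi(x)}{|x-y|^\alpha}$ (with $y\neq x$). Viscosity supersolution: a lower semicontinuous $u:\mathbb{R}^n\to\mathbb{R}$ with $|u(x)|\le C(1+|x|)^\beta$ for some $C>0$, $\beta<\alpha$, is a viscosity supersolution to $\mathcal{L}_\infty u=f$ in $\Omega$ if for every $x_0\in\Omega$ and every locally Lipschitz continuous $\varphi:\mathbb{R}^n\to\mathbb{R}$ with $|\varphi(x)|\le C(1+|x|)^\beta$ for some $C>0$, $\beta<\alpha$, such that $\varphi(x_0)=u(x_0)$ and $u\ge\varphi$ on $\mathbb{R}^n$, one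 has $\mathcal{L}_\infty\varphi(x_0)\le f(x_0)$. Viscosity subsolutions are defined analogously with $u$ upper semicontinuous, $u\le\varphi$ on $\mathbb{R}^n$, and $\mathcal{L}_\infty\varphi(x_0)\ge f(x_0)$; a viscosity solution is a continuous function that is both. *)

theory Defs
  imports "HOL-Analysis.Analysis"
begin

definition lsc :: "('a::topological_space \<Rightarrow> real) \<Rightarrow> bool" where
  "lsc u \<longleftrightarrow> (\<forall>x. \<forall>t. t < u x \<longrightarrow> (\<forall>\<^sub>F y in at x. t < u y))"

definition usc :: "('a::topological_space \<Rightarrow> real) \<Rightarrow> bool" where
  "usc u \<longleftrightarrow> (\<forall>x. \<forall>t. u x < t \<longrightarrow> (\<forall>\<^sub>F y in at x. u y < t))"

definition growth_ok :: "real \<Rightarrow> ('a::real_normed_vector \<Rightarrow> real) \<Rightarrow> bool" where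
  "growth_ok \<alpha> u \<longleftrightarrow> (\<exists>C \<beta>. C > 0 \<and> \<beta> < \<alpha> \<and> (\<forall>x. \<bar>u x\<bar> \<le> C * (1 + norm x) powr \<beta>))"

definition locally_lipschitz :: "('a::metric_space \<Rightarrow> real) \<Rightarrow> bool" where
  "locally_lipschitz \<phi> \<longleftrightarrow> (\<forall>x. \<exists>r>0. \<exists>L. lipschitz_on L (ball x r) \<phi>)"

definition Linf_plus :: "real \<Rightarrow> ('a::real_normed_vector \<Rightarrow> real) \<Rightarrow> 'a \<Rightarrow> real" where
  "Linf_plus \<alpha> \<phi> x = (SUP y\<in>UNIV - {x}. (\<phi> y - \<phi> x) / norm (x - y) powr \<alpha>)"

definition Linf_minus :: "real \<Rightarrow> ('a::real_normed_vector \<Rightarrow> real) \<Rightarrow> 'a \<Rightarrow> real" where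
  "Linf_minus \<alpha> \<phi> x = (INF y\<in>UNIV - {x}. (\<phi> y - \<phi> x) / norm (x - y) powr \<alpha>)"

definition Linf :: "real \<Rightarrow> ('a::real_normed_vector \<Rightarrow> real) \<Rightarrow> 'a \<Rightarrow> real" where
  "Linf \<alpha> \<phi> x = Linf_plus \<alpha> \<phi> x + Linf_minus \<alpha> \<phi> x"

definition admissible_test :: "real \<Rightarrow> ('a::real_normed_vector \<Rightarrow> real) \<Rightarrow> bool" where
  "admissible_test \<alpha> \<phi> \<longleftrightarrow> locally_lipschitz \<phi> \<and> growth_ok \<alpha> \<phi>"

definition viscosity_supersolution ::
  "real \<Rightarrow> ('a::real_normed_vector \<Rightarrow> real) \<Rightarrow> 'a set \<Rightarrow> ('a \<Rightarrow> real) \<Rightarrow> bool" where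
  "viscosity_supersolution \<alpha> f \<Omega> u \<longleftrightarrow>
     lsc u \<and> growth_ok \<alpha> u \<and>
     (\<forall>x0\<in>\<Omega>. \<forall>\<phi>. admissible_test \<alpha> \<phi> \<and> \<phi> x0 = u x0 \<and> (\<forall>x. u x \<ge> \<phi> x)
         \<longrightarrow> Linf \<alpha> \<phi> x0 \<le> f x0)"

definition viscosity_subsolution ::
  "real \<Rightarrow> ('a::real_normed_vector \<Rightarrow> real) \<Rightarrow> 'a set \<Rightarrow> ('a \<Rightarrow> real) \<Rightarrow> bool" where
  "viscosity_subsolution \<alpha> f \<Omega> u \<longleftrightarrow>
     usc u \<and> growth_ok \<alpha> u \<and>
     (\<forall>x0\<in>\<Omega>. \<forall>\<phi>. admissible_test \<alpha> \<phi> \<and> \<phi> x0 = u x0 \<and> (\<forall>x. u x \<le> \<phi> x)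
         \<longrightarrow> Linf \<alpha> \<phi> x0 \<ge> f x0)"

end

theory Submission
  imports Defs
begin

text \<open>A lower semicontinuous function attains its minimum over the compact set
\<open>closure \<Omega>\<close>; since \<open>u \<ge> u x0\<close> off \<Omega>, this is a global minimum of \<open>u\<close>, attained at
some \<open>z \<in> \<Omega>\<close>. If \<open>u\<close> were not constant, say \<open>u w > u z\<close>, then by lower semicontinuity
\<open>u > u z + \<delta>\<close> on a ball around \<open>w\<close>, and a tent of height \<open>\<delta>\<close> over a smaller ball,
sitting on the level \<open>u z\<close>, touches \<open>u\<close> from below at \<open>z\<close>. For this test function the
nonlocal infimum is \<open>0\<close> (\<open>z\<close> is a global minimum) and the supremum is positive, so
\<open>\<L>\<^sub>\<infinity> \<phi>(z) > 0 \<ge> f(z)\<close>, contradicting the supersolution property.\<close>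

lemma lsc_open_superlevel:
  assumes "lsc u" shows "open {x. t < u x}"
proof (subst open_subopen, intro ballI)
  fix x assume x: "x \<in> {x. t < u x}"
  then have "\<forall>\<^sub>F y in at x. t < u y" using assms unfolding lsc_def by auto
  then obtain S where "open S" "x \<in> S" "\<forall>y\<in>S. y \<noteq> x \<longrightarrow> t < u y"
    unfolding eventually_at_topological by blast
  with x show "\<exists>T. open T \<and> x \<in> T \<and> T \<subseteq> {x. t < u x}" by (intro exI[of _ S]) auto
qed

lemma lsc_closed_sublevel:
  assumes "lsc u" shows "closed {x. u x \<le> t}"
proof -
  have "{x. u x \<le> t} = - {x. t < u x}" by auto
  then show ?thesis using lsc_open_superlevel[OF assms] by (simp add: closed_Compl)
qed

lemma lsc_attains_min:
  fixes u :: "'a::topological_space \<Rightarrow> real"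
  assumes "lsc u" "compact K" "K \<noteq> {}"
  shows "\<exists>z\<in>K. \<forall>x\<in>K. u z \<le> u x"
proof -
  have "K \<inter> (\<Inter>x\<in>K. {y. u y \<le> u x}) \<noteq> {}"
  proof (rule compact_imp_fip_image[OF assms(2)])
    show "closed {y. u y \<le> u x}" for x using lsc_closed_sublevel[OF assms(1)] .
    fix I assume I: "finite I" "I \<subseteq> K"
    show "K \<inter> (\<Inter>x\<in>I. {y. u y \<le> u x}) \<noteq> {}"
    proof (cases "I = {}")
      case True then show ?thesis using assms(3) by simp
    next
      case False
      obtain z where "z \<in> I" "\<forall>x\<in>I. u z \<le> u x"
        using arg_min_if_finite[OF I(1) False, of u] by (meson not_less)
      then show ?thesis using I by blast
    qed
  qed
  then show ?thesis by blast
qed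

lemma lsc_global_min_in_domain:
  fixes u :: "'a::heine_borel \<Rightarrow> real"
  assumes "lsc u" "bounded \<Omega>" "x0 \<in> \<Omega>" "\<forall>y\<in>UNIV - \<Omega>. u x0 \<le> u y"
  shows "\<exists>z\<in>\<Omega>. \<forall>y. u z \<le> u y"
proof -
  have x0: "x0 \<in> closure \<Omega>" using assms(3) closure_subset by blast
  have "compact (closure \<Omega>)" "closure \<Omega> \<noteq> {}"
    using assms(2) x0 by (auto simp: compact_closure)
  then obtain z1 where z1: "z1 \<in> closure \<Omega>" "\<forall>x\<in>closure \<Omega>. u z1 \<le> u x"
    using lsc_attains_min[OF assms(1)] by blast
  obtain z where z: "z \<in> \<Omega>" "\<forall>x\<in>closure \<Omega>. u z \<le> u x"
  proof (cases "z1 \<in> \<Omega>")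
    case False
    then have "u x0 \<le> u z1" using assms(4) by blast
    then show ?thesis using that[of x0] assms(3) z1(2) by fastforce
  qed (use z1 in blast)
  have "u z \<le> u y" for y
  proof (cases "y \<in> closure \<Omega>")
    case False
    then have "u x0 \<le> u y" using assms(4) closure_subset by blast
    then show ?thesis using z(2) x0 by fastforce
  qed (use z in blast)
  with z(1) show ?thesis by blast
qed

definition tent :: "'a::metric_space \<Rightarrow> real \<Rightarrow> 'a \<Rightarrow> real" where
  "tent w r y = max 0 (1 - dist y w / r)"

lemma tent_nonneg: "0 \<le> tent w r y"
  by (simp add: tent_def)

lemma tent_le_one: "0 < r \<Longrightarrow> tent w r y \<le> 1"
  by (simp add: tent_def)

lemma tent_center: "0 < r \<Longrightarrow> tent w r w = 1"
  by (simp add: tent_def)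

lemma tent_eq_zero: "0 < r \<Longrightarrow> r \<le> dist y w \<Longrightarrow> tent w r y = 0"
  by (simp add: tent_def)

lemma lipschitz_on_tent: "0 < r \<Longrightarrow> (1 / r)-lipschitz_on S (tent w r)"
proof (rule lipschitz_onI)
  fix a b assume r: "0 < r"
  have "dist (tent w r a) (tent w r b) \<le> \<bar>dist b w / r - dist a w / r\<bar>"
    by (simp add: tent_def dist_real_def max_def abs_if)
  also have "\<dots> = \<bar>dist b w - dist a w\<bar> / r"
    using r by (simp add: diff_divide_distrib[symmetric] abs_divide)
  also have "\<dots> \<le> dist a b / r"
    using r abs_dist_diff_le[of b w a] by (simp add: dist_commute divide_right_mono)
  finally show "dist (tent w r a) (tent w r b) \<le> 1 / r * dist a b" by simp
qed (simp add: less_imp_le)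

lemma bounded_imp_growth_ok:
  fixes \<phi> :: "'a::real_normed_vector \<Rightarrow> real"
  assumes "0 < \<alpha>" "\<forall>x. \<bar>\<phi> x\<bar> \<le> B"
  shows "growth_ok \<alpha> \<phi>"
  unfolding growth_ok_def
proof (intro exI conjI allI)
  fix x :: 'a
  have "1 + norm x \<noteq> 0" using norm_ge_zero[of x] by linarith
  then show "\<bar>\<phi> x\<bar> \<le> (\<bar>B\<bar> + 1) * (1 + norm x) powr 0" using assms(2)[rule_format, of x] by simp
qed (use assms in auto)

lemma bdd_above_Linf_quotients:
  fixes \<phi> :: "'a::real_normed_vector \<Rightarrow> real"
  assumes "0 \<le> \<alpha>" "0 < \<rho>" "\<forall>y. \<phi> y \<le> M" "\<forall>y. dist y z < \<rho> \<longrightarrow> \<phi> y \<le> \<phi> z"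
  shows "bdd_above ((\<lambda>y. (\<phi> y - \<phi> z) / norm (z - y) powr \<alpha>) ` (UNIV - {z}))"
proof (rule bdd_aboveI2)
  fix y
  show "(\<phi> y - \<phi> z) / norm (z - y) powr \<alpha> \<le> max 0 ((M - \<phi> z) / \<rho> powr \<alpha>)"
  proof (cases "dist y z < \<rho> \<or> \<phi> y \<le> \<phi> z")
    case True
    then have "\<phi> y - \<phi> z \<le> 0" using assms(4) by auto
    then have "(\<phi> y - \<phi> z) / norm (z - y) powr \<alpha> \<le> 0" by (simp add: divide_nonpos_nonneg)
    then show ?thesis by linarith
  next
    case False
    then have "\<rho> powr \<alpha> \<le> norm (z - y) powr \<alpha>"
      using assms(1,2) by (intro powr_mono2) (auto simp: dist_norm norm_minus_commute)
    then have "(\<phi> y - \<phi> z) / norm (z - y) powr \<alpha> \<le> (\<phi> y - \<phi> z) / \<rho> powr \<alpha>"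
      using False assms(2) by (intro divide_left_mono mult_pos_pos) auto
    also have "\<dots> \<le> (M - \<phi> z) / \<rho> powr \<alpha>"
      using assms(3) by (simp add: divide_right_mono)
    finally show ?thesis by simp
  qed
qed

lemma Linf_pos_at_strict_min:
  fixes \<phi> :: "'a::real_normed_vector \<Rightarrow> real"
  assumes "\<forall>y. \<phi> z \<le> \<phi> y" "\<phi> z < \<phi> w"
    and "bdd_above ((\<lambda>y. (\<phi> y - \<phi> z) / norm (z - y) powr \<alpha>) ` (UNIV - {z}))"
  shows "0 < Linf \<alpha> \<phi> z"
proof -
  have wz: "w \<in> UNIV - {z}" using assms(2) by auto
  have "0 \<le> Linf_minus \<alpha> \<phi> z"
    unfolding Linf_minus_def using wz assms(1) by (intro cINF_greatest) auto
  moreover have "0 < (\<phi> w - \<phi> z) / norm (z - w) powr \<alpha>"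
    using wz assms(2) by simp
  then have "0 < Linf_plus \<alpha> \<phi> z"
    unfolding Linf_plus_def using wz assms(3) by (meson cSUP_upper order_less_le_trans)
  ultimately show ?thesis unfolding Linf_def by simp
qed

lemma lsc_min_touched_by_test_with_positive_Linf:
  fixes u :: "'a::real_normed_vector \<Rightarrow> real"
  assumes "lsc u" "0 < \<alpha>" "\<forall>y. u z \<le> u y" "u z < u w"
  shows "\<exists>\<phi>. admissible_test \<alpha> \<phi> \<and> \<phi> z = u z \<and> (\<forall>x. \<phi> x \<le> u x) \<and> 0 < Linf \<alpha> \<phi> z"
proof -
  define m \<delta> where "m = u z" and "\<delta> = (u w - u z) / 2"
  have \<delta>: "0 < \<delta>" "m + \<delta> < u w" using assms(4) unfolding m_def \<delta>_def by (simp_all add: field_simps)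
  obtain r where r: "0 < r" "ball w r \<subseteq> {x. m + \<delta> < u x}"
    using lsc_open_superlevel[OF assms(1)] \<delta>(2) by (meson mem_Collect_eq open_contains_ball)
  define \<rho> where "\<rho> = r / 2"
  have \<rho>: "0 < \<rho>" using r(1) by (simp add: \<rho>_def)
  define \<phi> where "\<phi> y = m + \<delta> * tent w \<rho> y" for y
  have \<phi>_bounds: "m \<le> \<phi> y" "\<phi> y \<le> m + \<delta>" for y
    using \<delta>(1) \<rho> tent_nonneg[of w \<rho> y] tent_le_one[of \<rho> w y]
    by (auto simp: \<phi>_def mult_left_le)
  have \<phi>_far: "\<phi> y = m" if "\<rho> \<le> dist y w" for y
    using tent_eq_zero[OF \<rho> that] by (simp add: \<phi>_def)
  have z_far: "r \<le> dist z w"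
  proof (rule ccontr)
    assume "\<not> r \<le> dist z w"
    then have "z \<in> ball w r" by (simp add: dist_commute)
    then show False using r(2) \<delta>(1) by (auto simp: m_def)
  qed
  have \<phi>z: "\<phi> z = u z"
    using z_far \<phi>_far \<rho>_def r(1) m_def by simp
  have below: "\<phi> y \<le> u y" for y
  proof (cases "dist w y < r")
    case True
    then show ?thesis using r(2) \<phi>_bounds(2)[of y] by fastforce
  next
    case False
    then show ?thesis using \<phi>_far[of y] assms(3) \<rho>_def r(1) m_def by (simp add: dist_commute)
  qed
  have "(0 + \<delta> * (1 / \<rho>))-lipschitz_on S \<phi>" for S
    unfolding \<phi>_def using \<delta>(1)
    by (intro lipschitz_on_add lipschitz_on_constant lipschitz_on_cmult_real_nonneg
        lipschitz_on_tent \<rho>) simp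
  then have "locally_lipschitz \<phi>"
    unfolding locally_lipschitz_def by (meson zero_less_one)
  moreover have "\<bar>\<phi> y\<bar> \<le> \<bar>m\<bar> + \<delta>" for y
    using \<phi>_bounds[of y] by linarith
  then have "growth_ok \<alpha> \<phi>"
    by (intro bounded_imp_growth_ok[OF assms(2)]) blast
  moreover have "0 < Linf \<alpha> \<phi> z"
  proof (rule Linf_pos_at_strict_min)
    show "\<forall>y. \<phi> z \<le> \<phi> y" using \<phi>_bounds(1) \<phi>z m_def by simp
    show "\<phi> z < \<phi> w" using \<rho> \<delta>(1) \<phi>z m_def by (simp add: \<phi>_def tent_center)
    have "\<phi> y \<le> \<phi> z" if "dist y z < \<rho>" for y
    proof -
      have "dist z w \<le> dist y z + dist y w" by (rule dist_triangle3)
      then show ?thesis using that z_far \<phi>_far[of y] \<phi>z m_def \<rho>_def by simp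
    qed
    then show "bdd_above ((\<lambda>y. (\<phi> y - \<phi> z) / norm (z - y) powr \<alpha>) ` (UNIV - {z}))"
      using \<phi>_bounds(2) assms(2) \<rho> by (intro bdd_above_Linf_quotients[where \<rho> = \<rho>]) auto
  qed
  ultimately show ?thesis
    unfolding admissible_test_def using \<phi>z below by blast
qed

theorem mainTheorem1:
  fixes \<Omega> :: "(real ^ 'n) set" and f u :: "real ^ 'n \<Rightarrow> real" and \<alpha> :: real
  assumes "0 < \<alpha>" and "\<alpha> \<le> 1"
    and "open \<Omega>" and "connected \<Omega>" and "bounded \<Omega>"
    and "continuous_on \<Omega> f" and "bounded (f ` \<Omega>)" and "\<forall>x\<in>\<Omega>. f x \<le> 0"
    and "viscosity_supersolution \<alpha> f \<Omega> u"
    and "x0 \<in> \<Omega>" and "\<forall>y\<in>UNIV - \<Omega>. u y \<ge> u x0"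
  shows "\<exists>c. \<forall>x. u x = c"
proof -
  have lsc: "lsc u" using assms(9) by (simp add: viscosity_supersolution_def)
  obtain z where z: "z \<in> \<Omega>" "\<forall>y. u z \<le> u y"
    using lsc_global_min_in_domain[OF lsc assms(5,10,11)] by blast
  have "u x = u z" for x
  proof (rule ccontr)
    assume "u x \<noteq> u z"
    then have "u z < u x" using z(2) by (simp add: order_less_le)
    then obtain \<phi> where \<phi>: "admissible_test \<alpha> \<phi>" "\<phi> z = u z" "\<forall>y. \<phi> y \<le> u y"
        and pos: "0 < Linf \<alpha> \<phi> z"
      using lsc_min_touched_by_test_with_positive_Linf[OF lsc assms(1) z(2)] by blast
    have "Linf \<alpha> \<phi> z \<le> f z"
      using assms(9) z(1) \<phi> unfolding viscosity_supersolution_def by blast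
    moreover have "f z \<le> 0" using assms(8) z(1) by blast
    ultimately show False using pos by linarith
  qed
  then show ?thesis by blast
qed

end
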